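(* Let $K=[x_1,x_2]\times[y_1,y_2]\in T_h$ with vertices $P_1=(x_1,y_1)$, $P_2=(x_2,y_1)$, $P_3=(x_2,y_2)$, $P_4=(x_1,y_2)$, and $h_x=x_2-x_1$, $h_y=y_2-y_1$. For $w,v\in U_h$ (restricted to $K$, so that $w_{xy}$ is constant on $K$), we have $$\int_{P_1P_4}(\Pi_h^*v-v)w_x\,dy=\frac{h_y^3}{24}v_y(x_1,y)w_{xy},\qquad \int_{P_1P_4}(\Pi_h^*v-v)w_y\,dy=0,$$ $$\int_{P_2P_3}(\Pi_h^*v-v)w_x\,dy=\frac{h_y^3}{24}v_y(x_2,y)w_{xy},\qquad \int_{P_2P_3}(\Pi_h^*v-v)w_y\,dy=0,$$ $$\int_{P_1P_2}(\Pi_h^*v-v)w_y\,dx=\frac{h_x^3}{24}v_x(x,y_1)w_{xy},\qquad \int_{P_1P_2}(\Pi_h^*v-v)w_x\,dx=0,$$ $$\int_{P_4P_3}(\Pi_h^*v-v)w_y\,dx=\frac{h_x^3}{24}v_x(x,y_2)w_{xy},\qquad \int_{P_4P_3}(\Pi_h^*v-v)w_x\,dx=0,$$ where the derivatives of $w,v$ are those of their restrictions to $K$ (note $v_y(x_1,y)$ is independent of $y$ and $v_x(x,y_1)$ is independent of $x$).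
   Context: $\Omega\subset\mathbb{R}^2$ is an open rectangle, $T_h$ a conforming partition of $\overline\Omega$ into closed rectangles with sides parallel to the axes, $N_h$ its set of nodes. The dual partition $T_h^*$ is obtained by connecting the center of each element to the midpoints of its edges; the control volume $K_P^*$ of a node $P$ is the union of the resulting sub-rectangles having $P$ as a vertex. $U_h=\{v\in C^0(\overline\Omega): v|_K\in Q_1(K)\ \forall K,\ v|_{\partial\Omega}=0\}$ ($Q_1$ = bilinear polynomials). $\Pi_h^*v=\sum_{P\in N_h}v(P)\chi_P$, $\chi_P$ the characteristic function of $K_P^*$; thus on an edge of $K$, $\Pi_h^*v$ equals the value of $v$ at the nearer endpoint. *)

theory Defs
  imports "HOL-Analysis.Analysis"
begin

text \<open>A bilinear (Q1) polynomial in two variables, as a function on the whole plane.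
  A function in U_h restricted to the element K coincides on K with such a polynomial;
  its derivatives "of the restriction to K" are those of this polynomial.\<close>
definition Q1_poly :: "(real \<Rightarrow> real \<Rightarrow> real) \<Rightarrow> bool" where
  "Q1_poly f \<longleftrightarrow> (\<exists>a b c d. f = (\<lambda>x y. a + b * x + c * y + d * x * y))"

definition pdx :: "(real \<Rightarrow> real \<Rightarrow> real) \<Rightarrow> real \<Rightarrow> real \<Rightarrow> real" where
  "pdx f x y = deriv (\<lambda>t. f t y) x"

definition pdy :: "(real \<Rightarrow> real \<Rightarrow> real) \<Rightarrow> real \<Rightarrow> real \<Rightarrow> real" where
  "pdy f x y = deriv (\<lambda>t. f x t) y"

text \<open>The dual interpolant restricted to K = [x1,x2] x [y1,y2]: the control volume of a
  vertex P meets K in the quarter sub-rectangle of K at P (cut at the midpoints), so on K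
  the value of Pi_h^* v is v at the vertex of the quarter containing the point
  (values on the mid-lines, a null set, are assigned to the lower/left vertex).\<close>
definition pistar_K :: "real \<Rightarrow> real \<Rightarrow> real \<Rightarrow> real \<Rightarrow> (real \<Rightarrow> real \<Rightarrow> real) \<Rightarrow> real \<Rightarrow> real \<Rightarrow> real" where
  "pistar_K x1 x2 y1 y2 v x y =
     v (if x \<le> (x1 + x2) / 2 then x1 else x2) (if y \<le> (y1 + y2) / 2 then y1 else y2)"

end

theory Submission
  imports Defs
begin

text \<open>Along an edge of K, v is affine in the edge parameter t, so \<open>\<Pi>\<^sub>h\<^sup>* v - v\<close> is the
  slope of v times the distance to the nearer endpoint, and the derivatives of w are affine in t
  as well. The whole lemma therefore reduces to one integral over an interval [a,b]: the
  piecewise-linear factor \<open>nearest endpoint - t\<close> has mean zero on [a,b], and against t it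
  yields \<open>(b - a)\<^sup>3 / 24\<close>.\<close>

lemma has_integral_linear_times_affine:
  fixes a c p \<beta> \<gamma>\<^sub>0 \<gamma> :: real
  assumes "a \<le> c"
  defines "F \<equiv> \<lambda>t. \<beta> * (p * \<gamma>\<^sub>0 * t + (p * \<gamma> - \<gamma>\<^sub>0) * t^2 / 2 - \<gamma> * t^3 / 3)"
  shows "((\<lambda>t. \<beta> * (p - t) * (\<gamma>\<^sub>0 + \<gamma> * t)) has_integral F c - F a) {a..c}"
proof (rule fundamental_theorem_of_calculus[OF assms(1)])
  fix x assume "x \<in> {a..c}"
  show "(F has_vector_derivative \<beta> * (p - x) * (\<gamma>\<^sub>0 + \<gamma> * x)) (at x within {a..c})"
    unfolding F_def has_real_derivative_iff_has_vector_derivative[symmetric]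
    by (rule derivative_eq_intros refl | simp)+ (simp add: field_simps power2_eq_square)
qed

lemma integral_nearest_endpoint_error:
  fixes a b \<beta> \<gamma>\<^sub>0 \<gamma> :: real
  assumes "a < b"
  shows "integral {a..b} (\<lambda>t. \<beta> * ((if t \<le> (a + b) / 2 then a else b) - t) * (\<gamma>\<^sub>0 + \<gamma> * t))
           = (b - a)^3 / 24 * \<beta> * \<gamma>"
proof -
  define m where "m = (a + b) / 2"
  define F where "F p t = \<beta> * (p * \<gamma>\<^sub>0 * t + (p * \<gamma> - \<gamma>\<^sub>0) * t^2 / 2 - \<gamma> * t^3 / 3)"
    for p t
  let ?f = "\<lambda>t. \<beta> * ((if t \<le> m then a else b) - t) * (\<gamma>\<^sub>0 + \<gamma> * t)"
  have m: "a \<le> m" "m \<le> b" using assms by (auto simp: m_def)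
  have left: "(?f has_integral F a m - F a a) {a..m}"
    unfolding F_def
    by (rule has_integral_spike_finite[where S="{}", OF _ _
          has_integral_linear_times_affine[OF m(1), of \<beta> a]]) auto
  have right: "(?f has_integral F b b - F b m) {m..b}"
    unfolding F_def
    by (rule has_integral_spike_finite[where S="{m}", OF _ _
          has_integral_linear_times_affine[OF m(2), of \<beta> b]]) auto
  have "integral {a..b} ?f = (F a m - F a a) + (F b b - F b m)"
    by (rule integral_unique[OF has_integral_combine[OF m left right]])
  also have "\<dots> = (b - a)^3 / 24 * \<beta> * \<gamma>"
    by (simp add: F_def m_def field_simps power2_eq_square power3_eq_cube)
  finally show ?thesis by (simp add: m_def)
qed

lemma pdx_bilinear: "pdx (\<lambda>x y. a + b * x + c * y + d * x * y) = (\<lambda>x y. b + d * y)"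
  unfolding pdx_def by (intro ext DERIV_imp_deriv) (auto intro!: derivative_eq_intros)

lemma pdy_bilinear: "pdy (\<lambda>x y. a + b * x + c * y + d * x * y) = (\<lambda>x y. c + d * x)"
  unfolding pdy_def by (intro ext DERIV_imp_deriv) (auto intro!: derivative_eq_intros)

lemma Q1_poly_pdx:
  assumes "Q1_poly f"
  shows "Q1_poly (pdx f)"
proof -
  obtain a b c d where "f = (\<lambda>x y. a + b * x + c * y + d * x * y)"
    using assms unfolding Q1_poly_def by blast
  then have "pdx f = (\<lambda>x y. b + 0 * x + d * y + 0 * x * y)"
    by (simp add: pdx_bilinear)
  then show ?thesis unfolding Q1_poly_def by blast
qed

lemma Q1_poly_pdy:
  assumes "Q1_poly f"
  shows "Q1_poly (pdy f)"
proof -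
  obtain a b c d where "f = (\<lambda>x y. a + b * x + c * y + d * x * y)"
    using assms unfolding Q1_poly_def by blast
  then have "pdy f = (\<lambda>x y. c + d * x + 0 * y + 0 * x * y)"
    by (simp add: pdy_bilinear)
  then show ?thesis unfolding Q1_poly_def by blast
qed

lemma Q1_poly_second_derivs:
  assumes "Q1_poly f"
  shows "pdx (pdy f) = pdy (pdx f)" and "pdx (pdx f) x y = 0" and "pdy (pdy f) x y = 0"
proof -
  obtain a b c d where "f = (\<lambda>x y. a + b * x + c * y + d * x * y)"
    using assms unfolding Q1_poly_def by blast
  then show "pdx (pdy f) = pdy (pdx f)" and "pdx (pdx f) x y = 0" and "pdy (pdy f) x y = 0"
    by (simp_all add: pdx_bilinear pdy_bilinear
        pdx_bilinear[of _ 0 _ 0, simplified] pdy_bilinear[of _ 0 _ 0, simplified]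
        pdx_bilinear[of _ _ 0 0, simplified] pdy_bilinear[of _ _ 0 0, simplified])
qed

lemma Q1_poly_affine_in_x:
  assumes "Q1_poly f"
  shows "f s y = f 0 y + pdx f x y * s"
proof -
  obtain a b c d where "f = (\<lambda>x y. a + b * x + c * y + d * x * y)"
    using assms unfolding Q1_poly_def by blast
  then show ?thesis by (simp add: pdx_bilinear) (simp add: algebra_simps)
qed

lemma Q1_poly_affine_in_y:
  assumes "Q1_poly f"
  shows "f x t = f x 0 + pdy f x y * t"
proof -
  obtain a b c d where "f = (\<lambda>x y. a + b * x + c * y + d * x * y)"
    using assms unfolding Q1_poly_def by blast
  then show ?thesis by (simp add: pdy_bilinear) (simp add: algebra_simps)
qed

lemma integral_vertical_edge_error:
  assumes "y1 < y2" and "Q1_poly v" and "Q1_poly g"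
  shows "integral {y1..y2} (\<lambda>t. (v x (if t \<le> (y1 + y2) / 2 then y1 else y2) - v x t) * g x t)
           = (y2 - y1)^3 / 24 * pdy v x y * pdy g x y"
proof -
  have slope: "v x e - v x t = pdy v x y * (e - t)" for e t
    using Q1_poly_affine_in_y[OF assms(2), of x e y] Q1_poly_affine_in_y[OF assms(2), of x t y]
    by (simp add: right_diff_distrib)
  have integrand: "(v x (if t \<le> (y1 + y2) / 2 then y1 else y2) - v x t) * g x t
      = pdy v x y * ((if t \<le> (y1 + y2) / 2 then y1 else y2) - t) * (g x 0 + pdy g x y * t)" for t
    unfolding slope by (subst Q1_poly_affine_in_y[OF assms(3), of x t y]) (rule refl)
  show ?thesis
    unfolding integrand by (rule integral_nearest_endpoint_error[OF assms(1)])
qed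

lemma integral_horizontal_edge_error:
  assumes "x1 < x2" and "Q1_poly v" and "Q1_poly g"
  shows "integral {x1..x2} (\<lambda>s. (v (if s \<le> (x1 + x2) / 2 then x1 else x2) y - v s y) * g s y)
           = (x2 - x1)^3 / 24 * pdx v x y * pdx g x y"
proof -
  have slope: "v e y - v s y = pdx v x y * (e - s)" for e s
    using Q1_poly_affine_in_x[OF assms(2), of e y x] Q1_poly_affine_in_x[OF assms(2), of s y x]
    by (simp add: right_diff_distrib)
  have integrand: "(v (if s \<le> (x1 + x2) / 2 then x1 else x2) y - v s y) * g s y
      = pdx v x y * ((if s \<le> (x1 + x2) / 2 then x1 else x2) - s) * (g 0 y + pdx g x y * s)" for s
    unfolding slope by (subst Q1_poly_affine_in_x[OF assms(3), of s y x]) (rule refl)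
  show ?thesis
    unfolding integrand by (rule integral_nearest_endpoint_error[OF assms(1)])
qed

theorem lemma3p2:
  fixes x1 x2 y1 y2 :: real and v w :: "real \<Rightarrow> real \<Rightarrow> real"
  assumes "x1 < x2" and "y1 < y2"
    and "Q1_poly v" and "Q1_poly w"
  defines "hx \<equiv> x2 - x1" and "hy \<equiv> y2 - y1"
    and "Pv \<equiv> pistar_K x1 x2 y1 y2 v"
  shows
    "(\<forall>y\<in>{y1..y2}. integral {y1..y2} (\<lambda>t. (Pv x1 t - v x1 t) * pdx w x1 t)
        = hy ^ 3 / 24 * pdy v x1 y * pdy (pdx w) x1 y)
   \<and> integral {y1..y2} (\<lambda>t. (Pv x1 t - v x1 t) * pdy w x1 t) = 0
   \<and> (\<forall>y\<in>{y1..y2}. integral {y1..y2} (\<lambda>t. (Pv x2 t - v x2 t) * pdx w x2 t)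
        = hy ^ 3 / 24 * pdy v x2 y * pdy (pdx w) x2 y)
   \<and> integral {y1..y2} (\<lambda>t. (Pv x2 t - v x2 t) * pdy w x2 t) = 0
   \<and> (\<forall>x\<in>{x1..x2}. integral {x1..x2} (\<lambda>s. (Pv s y1 - v s y1) * pdy w s y1)
        = hx ^ 3 / 24 * pdx v x y1 * pdy (pdx w) x y1)
   \<and> integral {x1..x2} (\<lambda>s. (Pv s y1 - v s y1) * pdx w s y1) = 0
   \<and> (\<forall>x\<in>{x1..x2}. integral {x1..x2} (\<lambda>s. (Pv s y2 - v s y2) * pdy w s y2)
        = hx ^ 3 / 24 * pdx v x y2 * pdy (pdx w) x y2)
   \<and> integral {x1..x2} (\<lambda>s. (Pv s y2 - v s y2) * pdx w s y2) = 0"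
proof -
  have Pv_on_vertical_edge: "Pv x t = v x (if t \<le> (y1 + y2) / 2 then y1 else y2)" if "x \<in> {x1, x2}" for x t
    using that assms(1) by (auto simp: Pv_def pistar_K_def)
  have Pv_on_horizontal_edge: "Pv s y = v (if s \<le> (x1 + x2) / 2 then x1 else x2) y" if "y \<in> {y1, y2}" for s y
    using that assms(2) by (auto simp: Pv_def pistar_K_def)
  have vertical_edges:
    "integral {y1..y2} (\<lambda>t. (Pv x t - v x t) * g x t) = hy ^ 3 / 24 * pdy v x y * pdy g x y"
    if "x \<in> {x1, x2}" and "Q1_poly g" for x y g
    unfolding Pv_on_vertical_edge[OF that(1)] hy_def
    by (rule integral_vertical_edge_error[OF assms(2,3) that(2)])
  have horizontal_edges:
    "integral {x1..x2} (\<lambda>s. (Pv s y - v s y) * g s y) = hx ^ 3 / 24 * pdx v x y * pdx g x y"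
    if "y \<in> {y1, y2}" and "Q1_poly g" for x y g
    unfolding Pv_on_horizontal_edge[OF that(1)] hx_def
    by (rule integral_horizontal_edge_error[OF assms(1,3) that(2)])
  note Q1_derivs = Q1_poly_pdx[OF assms(4)] Q1_poly_pdy[OF assms(4)]
  note horizontal_edges_pdy_w =
    horizontal_edges[where g="pdy w", unfolded Q1_poly_second_derivs(1)[OF assms(4)]]
  show ?thesis
    by (intro conjI ballI; (rule vertical_edges horizontal_edges_pdy_w; simp add: Q1_derivs)?)
      (simp_all add: vertical_edges[where y=y1] horizontal_edges[where x=x1] Q1_derivs
        Q1_poly_second_derivs[OF assms(4)])
qed

end
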